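(* Let $\mathcal{D}$ be a collection of random variables on $\Omega$ containing all constants, with coherent$_1$ marginal previsions $P(\cdot)$. Let $\mathcal{L}$ be the linear span of all functions of the form $XB$ with $X\in\mathcal{D}$ and $B$ a nonempty event. Then there exists a coherent$_1$ conditional prevision $P(\cdot\mid\cdot)$ on the set $\{(X,B):X\in\mathcal{L},\ B\ne\emptyset\}$, with $P(X\mid\Omega)=P(X)$ for $X\in\mathcal{D}$, such that for each nonempty event $B$, $P(\cdot\mid B)$ is a finitely additive expectation on $\mathcal{L}$ with $P(XB\mid B)=P(X\mid B)$ for all $X\in\mathcal{L}$; that is, $P(\cdot\mid\cdot)$ is a finitely additive conditional expectation.
   Context: Random variables are real-valued functions on a nonempty set $\Omega$; events are subsets, identified with indicator functions; $XB$ is the pointwise product. Previsions are extended real numbers; $P(X)=P(X\mid\Omega)$. Coherence$_1$: a collection $\{P(X_i\mid B_i):i\in I\}$ (with nonempty $B_i$) is coherent$_1$ if for every finite $\{i_1,\dots,i_n\}\subseteq I$, all real $\alpha_1,\dots,\alpha_n$ with $\alpha_j\ge 0$ whenever $P(X_{i_j}\mid B_{i_j})=+\infty$ and $\alpha_j\le 0$ whenever $P(X_{i_j}\mid B_{i_j})=-\infty$, and all real $c_j$ with $c_j=P(X_{i_j}\mid B_{i_j})$ whenever finite, $\sup_\omega \sum_{j=1}^n \alpha_j B_{i_j}(\omega)[X_{i_j}(\omega)-c_j]\ge 0$. A finitely additive expectation on a linear space $\mathcal{L}$ containing constants is a map $L:\mathcal{L}\to\mathbb{R}\cup\{\pm\infty\}$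 that is nonnegative ($X\le Y$ implies $L(X)\le L(Y)$), extended-linear ($L(\alpha X+\beta Y)=\alpha L(X)+\beta L(Y)$ for real $\alpha,\beta$ whenever the right side is not $\infty-\infty$, with $0\times(\pm\infty)=0$), and has $L(1)=1$. Finitely additive conditional expectation: given a linear space $\mathcal{L}$, a collection $\mathcal{B}$ of nonempty events including $\Omega$ with $XB\in\mathcal{L}$ for $X\in\mathcal{L}$, $B\in\mathcal{B}$, a map $L(\cdot\mid\cdot):\mathcal{L}\times\mathcal{B}\to\mathbb{R}\cup\{\pm\infty\}$ is a finitely additive conditional expectation if for each $B\in\mathcal{B}$, $L(\cdot\mid B)$ is a finitely additive expectation on $\mathcal{L}$ with $L(XB\mid B)=L(X\mid B)$, and $\{L(X\mid B)\}$ is a coherent$_1$ conditional prevision. *)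

theory Defs
  imports "HOL-Analysis.Analysis"
begin

text \<open>Sample space: the (nonempty) universe of type 'w.
  Events: 'w set, identified with their real indicator functions.\<close>

definition coherent1 :: "(('w \<Rightarrow> real) \<times> 'w set) set \<Rightarrow> (('w \<Rightarrow> real) \<Rightarrow> 'w set \<Rightarrow> ereal) \<Rightarrow> bool" where
  "coherent1 S P \<longleftrightarrow>
     (\<forall>F \<alpha> c. finite F \<and> F \<subseteq> S
        \<and> (\<forall>p\<in>F. P (fst p) (snd p) = \<infinity> \<longrightarrow> \<alpha> p \<ge> 0)
        \<and> (\<forall>p\<in>F. P (fst p) (snd p) = -\<infinity> \<longrightarrow> \<alpha> p \<le> 0)
        \<and> (\<forall>p\<in>F. \<bar>P (fst p) (snd p)\<bar> \<noteq> \<infinity> \<longrightarrow> ereal (c p) = P (fst p) (snd p))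
      \<longrightarrow> (SUP \<omega>. ereal (\<Sum>p\<in>F. \<alpha> p * indicator (snd p) \<omega> * (fst p \<omega> - c p))) \<ge> 0)"

definition lin_span :: "('w \<Rightarrow> real) set \<Rightarrow> ('w \<Rightarrow> real) set" where
  "lin_span S = {(\<lambda>\<omega>. \<Sum>i<(n::nat). a i * f i \<omega>) | n a f. \<forall>i<n. f i \<in> S}"

definition fa_expectation :: "('w \<Rightarrow> real) set \<Rightarrow> (('w \<Rightarrow> real) \<Rightarrow> ereal) \<Rightarrow> bool" where
  "fa_expectation L E \<longleftrightarrow>
     (\<forall>X\<in>L. \<forall>Y\<in>L. (\<forall>\<omega>. X \<omega> \<le> Y \<omega>) \<longrightarrow> E X \<le> E Y)
   \<and> (\<forall>X\<in>L. \<forall>Y\<in>L. \<forall>a b::real.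
        \<not> (ereal a * E X = \<infinity> \<and> ereal b * E Y = -\<infinity>)
      \<and> \<not> (ereal a * E X = -\<infinity> \<and> ereal b * E Y = \<infinity>)
      \<longrightarrow> E (\<lambda>\<omega>. a * X \<omega> + b * Y \<omega>) = ereal a * E X + ereal b * E Y)
   \<and> E (\<lambda>_. 1) = 1"

definition fa_cond_expectation ::
  "('w \<Rightarrow> real) set \<Rightarrow> 'w set set \<Rightarrow> (('w \<Rightarrow> real) \<Rightarrow> 'w set \<Rightarrow> ereal) \<Rightarrow> bool" where
  "fa_cond_expectation L \<B> P \<longleftrightarrow>
     (\<forall>B\<in>\<B>. fa_expectation L (\<lambda>X. P X B)
         \<and> (\<forall>X\<in>L. P (\<lambda>\<omega>. X \<omega> * indicator B \<omega>) B = P X B))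
   \<and> coherent1 (L \<times> \<B>) P"

end

theory Submission
  imports Defs
begin

text \<open>By de Finetti's extension argument, a coherent unconditional prevision extends coherently to
  one more random variable, priced at its natural extension; Zorn's lemma then extends \<open>P0\<close> to a
  coherent prevision \<open>E\<close> on all random variables, and such an \<open>E\<close> is a finitely additive
  expectation. Conditional previsions are obtained from \<open>E\<close> by Bayes' rule when \<open>E B > 0\<close>. Every
  conditional bet \<open>\<alpha> B (X - P(X|B))\<close> then has nonnegative \<open>E\<close>-expectation, hence so has any finite
  sum of them, and a random variable with nonnegative expectation has nonnegative supremum: this
  is coherence of the conditional prevision.\<close>

section \<open>Bets and unconditional coherence\<close>

definition admissible_bet :: "ereal \<Rightarrow> real \<Rightarrow> real \<Rightarrow> bool" where
  "admissible_bet v a c \<longleftrightarrow>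
     (v = \<infinity> \<longrightarrow> 0 \<le> a) \<and> (v = -\<infinity> \<longrightarrow> a \<le> 0) \<and> (\<bar>v\<bar> \<noteq> \<infinity> \<longrightarrow> ereal c = v)"

lemma coherent1_iff_admissible_bet:
  "coherent1 S P \<longleftrightarrow>
     (\<forall>F \<alpha> c. finite F \<and> F \<subseteq> S \<and> (\<forall>p\<in>F. admissible_bet (P (fst p) (snd p)) (\<alpha> p) (c p))
        \<longrightarrow> 0 \<le> (SUP \<omega>. ereal (\<Sum>p\<in>F. \<alpha> p * indicator (snd p) \<omega> * (fst p \<omega> - c p))))"
  unfolding coherent1_def admissible_bet_def by (simp add: ball_conj_distrib conj_assoc)

text \<open>A bet \<open>(Y, a, c)\<close> has stake \<open>a\<close> on \<open>Y\<close> at price \<open>c\<close> and pays \<open>a * (Y - c)\<close>. Unlike in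
  \<open>coherent1\<close>, bets come in lists, so one variable may carry several bets at different
  prices (possible when its prevision is infinite).\<close>

type_synonym 'w bet = "('w \<Rightarrow> real) \<times> real \<times> real"

definition gain :: "'w bet list \<Rightarrow> 'w \<Rightarrow> real" where
  "gain xs \<omega> = (\<Sum>(Y, a, c)\<leftarrow>xs. a * (Y \<omega> - c))"

definition admissible_bets :: "(('w \<Rightarrow> real) \<Rightarrow> ereal) \<Rightarrow> ('w \<Rightarrow> real) set \<Rightarrow> 'w bet list \<Rightarrow> bool" where
  "admissible_bets E M xs \<longleftrightarrow> (\<forall>(Y, a, c)\<in>set xs. Y \<in> M \<and> admissible_bet (E Y) a c)"

definition coherent_on :: "(('w \<Rightarrow> real) \<Rightarrow> ereal) \<Rightarrow> ('w \<Rightarrow> real) set \<Rightarrow> bool" where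
  "coherent_on E M \<longleftrightarrow> (\<forall>xs. admissible_bets E M xs \<longrightarrow> 0 \<le> (SUP \<omega>. ereal (gain xs \<omega>)))"

lemma gain_Nil [simp]: "gain [] \<omega> = 0"
  by (simp add: gain_def)

lemma gain_Cons [simp]: "gain ((Y, a, c) # xs) \<omega> = a * (Y \<omega> - c) + gain xs \<omega>"
  by (simp add: gain_def)

lemma gain_append: "gain (xs @ ys) \<omega> = gain xs \<omega> + gain ys \<omega>"
  by (simp add: gain_def)

lemma gain_filter_partition: "gain xs \<omega> = gain (filter P xs) \<omega> + gain (filter (\<lambda>t. \<not> P t) xs) \<omega>"
  by (induction xs) auto

definition scale_bets :: "real \<Rightarrow> 'w bet list \<Rightarrow> 'w bet list" where
  "scale_bets r xs = map (\<lambda>(Y, a, c). (Y, r * a, c)) xs"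

lemma gain_scale_bets: "gain (scale_bets r xs) \<omega> = r * gain xs \<omega>"
  by (induction xs) (auto simp: scale_bets_def algebra_simps)

lemma admissible_bets_scale_bets:
  "0 \<le> r \<Longrightarrow> admissible_bets E M xs \<Longrightarrow> admissible_bets E M (scale_bets r xs)"
  by (auto simp: scale_bets_def admissible_bets_def admissible_bet_def mult_nonneg_nonpos)

lemma admissible_bets_append [simp]:
  "admissible_bets E M (xs @ ys) \<longleftrightarrow> admissible_bets E M xs \<and> admissible_bets E M ys"
  by (simp add: admissible_bets_def ball_Un)

lemma admissible_bets_variables: "admissible_bets E M xs \<Longrightarrow> fst ` set xs \<subseteq> M"
  by (auto simp: admissible_bets_def)

lemma admissible_bets_transfer:
  assumes "admissible_bets E M xs" "\<And>Y. Y \<in> fst ` set xs \<Longrightarrow> Y \<in> M' \<and> E' Y = E Y"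
  shows "admissible_bets E' M' xs"
  using assms by (fastforce simp: admissible_bets_def)

lemma ereal_SUP_nonneg_iff: "0 \<le> (SUP \<omega>. ereal (f \<omega>)) \<longleftrightarrow> (\<forall>e>0. \<exists>\<omega>. -e < f \<omega>)"
proof
  assume "0 \<le> (SUP \<omega>. ereal (f \<omega>))"
  then have "ereal (-e) < (SUP \<omega>. ereal (f \<omega>))" if "0 < e" for e
  proof -
    have "ereal (-e) < 0" using that by (simp add: zero_ereal_def)
    then show ?thesis using \<open>0 \<le> _\<close> by (rule order_less_le_trans)
  qed
  then show "\<forall>e>0. \<exists>\<omega>. -e < f \<omega>"
    by (simp add: less_SUP_iff)
next
  assume *: "\<forall>e>0. \<exists>\<omega>. -e < f \<omega>"
  show "0 \<le> (SUP \<omega>. ereal (f \<omega>))"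
  proof (rule ereal_le_epsilon2)
    fix e :: real assume "0 < e"
    then obtain \<omega> where "-e < f \<omega>" using * by blast
    then have "0 \<le> ereal (f \<omega>) + ereal e" by simp
    also have "\<dots> \<le> (SUP \<omega>. ereal (f \<omega>)) + ereal e" by (intro add_right_mono SUP_upper) auto
    finally show "0 \<le> (SUP \<omega>. ereal (f \<omega>)) + ereal e" .
  qed
qed

lemma coherent_onD:
  "coherent_on E M \<Longrightarrow> admissible_bets E M xs \<Longrightarrow> 0 < e \<Longrightarrow> \<exists>\<omega>. -e < gain xs \<omega>"
  unfolding coherent_on_def ereal_SUP_nonneg_iff by blast

lemma coherent_on_cong: "(\<And>Y. Y \<in> M \<Longrightarrow> E Y = E' Y) \<Longrightarrow> coherent_on E M \<longleftrightarrow> coherent_on E' M"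
proof -
  assume "\<And>Y. Y \<in> M \<Longrightarrow> E Y = E' Y"
  then have "admissible_bets E M xs \<longleftrightarrow> admissible_bets E' M xs" for xs
    by (auto simp: admissible_bets_def)
  then show ?thesis by (simp add: coherent_on_def)
qed

lemma admissible_bet_add:
  assumes "admissible_bet v a1 c1" "admissible_bet v a2 c2"
  shows "\<exists>c. admissible_bet v (a1 + a2) c \<and> a1 * c1 + a2 * c2 = (a1 + a2) * c"
proof (cases "\<bar>v\<bar> = \<infinity>")
  case False
  then show ?thesis
    using assms by (intro exI[of _ "real_of_ereal v"]) (auto simp: admissible_bet_def algebra_simps)
next
  case True
  show ?thesis
  proof (cases "a1 + a2 = 0")
    case True
    then have "a1 = 0 \<and> a2 = 0"
      using assms \<open>\<bar>v\<bar> = \<infinity>\<close> by (auto simp: admissible_bet_def)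
    then show ?thesis using \<open>\<bar>v\<bar> = \<infinity>\<close> by (auto simp: admissible_bet_def)
  next
    case False
    then show ?thesis
      using assms \<open>\<bar>v\<bar> = \<infinity>\<close>
      by (intro exI[of _ "(a1 * c1 + a2 * c2) / (a1 + a2)"]) (auto simp: admissible_bet_def)
  qed
qed

lemma gain_single_variable:
  assumes "\<forall>(Y, a, c)\<in>set xs. Y = X \<and> admissible_bet v a c"
  shows "\<exists>A c. admissible_bet v A c \<and> (\<forall>\<omega>. gain xs \<omega> = A * (X \<omega> - c))"
  using assms
proof (induction xs)
  case Nil
  have "admissible_bet v 0 (if \<bar>v\<bar> = \<infinity> then 0 else real_of_ereal v)"
    by (cases v) (auto simp: admissible_bet_def)
  then show ?case by auto
next
  case (Cons t xs)
  obtain Y a c where t: "t = (Y, a, c)" by (cases t)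
  obtain A c' where A: "admissible_bet v A c'" "\<And>\<omega>. gain xs \<omega> = A * (X \<omega> - c')"
    using Cons by auto
  obtain c'' where c'': "admissible_bet v (a + A) c''" "a * c + A * c' = (a + A) * c''"
    using admissible_bet_add[of v a c A c'] A(1) Cons.prems t by auto
  have "Y = X" using Cons.prems t by simp
  have "gain (t # xs) \<omega> = (a + A) * (X \<omega> - c'')" for \<omega>
  proof -
    have "gain (t # xs) \<omega> = (a + A) * X \<omega> - (a * c + A * c')"
      using A(2) \<open>Y = X\<close> t by (simp add: algebra_simps)
    also have "\<dots> = (a + A) * (X \<omega> - c'')"
      unfolding c''(2) by (simp add: right_diff_distrib)
    finally show ?thesis .
  qed
  then show ?case using c''(1) by blast
qed

lemma gain_eq_sum_by_variable:
  "gain xs \<omega> = (\<Sum>Z\<in>fst ` set xs. gain (filter (\<lambda>t. fst t = Z) xs) \<omega>)"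
proof (induction xs)
  case (Cons t xs)
  obtain Y a c where t: "t = (Y, a, c)" by (cases t)
  let ?g = "\<lambda>Z. gain (filter (\<lambda>t. fst t = Z) xs) \<omega>"
  have "?g Y = 0" if "Y \<notin> fst ` set xs"
    using that by (subst filter_False) (auto simp: image_iff)
  then have "(\<Sum>Z\<in>insert Y (fst ` set xs). ?g Z) = (\<Sum>Z\<in>fst ` set xs. ?g Z)"
    by (cases "Y \<in> fst ` set xs") (auto simp: insert_absorb)
  moreover have "(\<Sum>Z\<in>insert Y (fst ` set xs). gain (filter (\<lambda>t. fst t = Z) (t # xs)) \<omega>)
      = a * (Y \<omega> - c) + (\<Sum>Z\<in>insert Y (fst ` set xs). ?g Z)"
  proof -
    have "(\<Sum>Z\<in>insert Y (fst ` set xs). gain (filter (\<lambda>t. fst t = Z) (t # xs)) \<omega>)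
        = (\<Sum>Z\<in>insert Y (fst ` set xs). (if Y = Z then a * (Y \<omega> - c) else 0) + ?g Z)"
      by (intro sum.cong refl) (simp add: t)
    also have "\<dots> = a * (Y \<omega> - c) + (\<Sum>Z\<in>insert Y (fst ` set xs). ?g Z)"
      by (simp only: sum.distrib sum.delta' finite_insert List.finite_set finite_imageI insertI1 if_True)
    finally show ?thesis .
  qed
  ultimately show ?case using Cons.IH t by simp
qed simp

lemma admissible_bets_normal_form:
  assumes "admissible_bets E M xs"
  shows "\<exists>F \<alpha> c. finite F \<and> F \<subseteq> M \<and> (\<forall>Z\<in>F. admissible_bet (E Z) (\<alpha> Z) (c Z))
           \<and> (\<forall>\<omega>. gain xs \<omega> = (\<Sum>Z\<in>F. \<alpha> Z * (Z \<omega> - c Z)))"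
proof -
  have "\<forall>Z\<in>fst ` set xs. \<exists>A c. admissible_bet (E Z) A c
          \<and> (\<forall>\<omega>. gain (filter (\<lambda>t. fst t = Z) xs) \<omega> = A * (Z \<omega> - c))"
    using assms by (intro ballI gain_single_variable) (auto simp: admissible_bets_def)
  from bchoice[OF this] obtain \<alpha> where "\<forall>Z\<in>fst ` set xs. \<exists>c. admissible_bet (E Z) (\<alpha> Z) c
          \<and> (\<forall>\<omega>. gain (filter (\<lambda>t. fst t = Z) xs) \<omega> = \<alpha> Z * (Z \<omega> - c))"
    ..
  from bchoice[OF this] obtain c where \<alpha>c: "\<forall>Z\<in>fst ` set xs. admissible_bet (E Z) (\<alpha> Z) (c Z)
          \<and> (\<forall>\<omega>. gain (filter (\<lambda>t. fst t = Z) xs) \<omega> = \<alpha> Z * (Z \<omega> - c Z))"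
    ..
  have "gain xs \<omega> = (\<Sum>Z\<in>fst ` set xs. \<alpha> Z * (Z \<omega> - c Z))" for \<omega>
    unfolding gain_eq_sum_by_variable[of xs \<omega>] using \<alpha>c by (intro sum.cong) auto
  moreover have "fst ` set xs \<subseteq> M" using assms by (auto simp: admissible_bets_def)
  ultimately show ?thesis
    using \<alpha>c by (intro exI[where x="fst ` set xs"] exI[where x=\<alpha>] exI[where x=c]) simp
qed

lemma coherent1_imp_coherent_on:
  assumes coh: "coherent1 {(X, UNIV) | X. X \<in> D} (\<lambda>X B. P0 X)"
  shows "coherent_on P0 D"
  unfolding coherent_on_def
proof (intro allI impI)
  fix xs assume "admissible_bets P0 D xs"
  from admissible_bets_normal_form[OF this] obtain F \<alpha> c where F: "finite F" "F \<subseteq> D" "\<forall>Z\<in>F. admissible_bet (P0 Z) (\<alpha> Z) (c Z)"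
    and gain: "\<And>\<omega>. gain xs \<omega> = (\<Sum>Z\<in>F. \<alpha> Z * (Z \<omega> - c Z))"
    by blast
  let ?F = "(\<lambda>Z. (Z, UNIV)) ` F"
  have "(\<Sum>p\<in>?F. \<alpha> (fst p) * indicator (snd p) \<omega> * (fst p \<omega> - c (fst p))) = gain xs \<omega>" for \<omega>
    by (simp add: gain sum.reindex inj_on_def)
  moreover have "0 \<le> (SUP \<omega>. ereal (\<Sum>p\<in>?F. \<alpha> (fst p) * indicator (snd p) \<omega> * (fst p \<omega> - c (fst p))))"
    using coh F unfolding coherent1_iff_admissible_bet
    by (elim allE[of _ ?F] allE[of _ "\<alpha> \<circ> fst"] allE[of _ "c \<circ> fst"]) auto
  ultimately show "0 \<le> (SUP \<omega>. ereal (gain xs \<omega>))" by simp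
qed

section \<open>Extension to all random variables\<close>

definition natural_extension :: "(('w \<Rightarrow> real) \<Rightarrow> ereal) \<Rightarrow> ('w \<Rightarrow> real) set \<Rightarrow> ('w \<Rightarrow> real) \<Rightarrow> ereal" where
  "natural_extension E M X = (INF xs\<in>{xs. admissible_bets E M xs}. SUP \<omega>. ereal (gain xs \<omega> + X \<omega>))"

lemma natural_extension_le:
  "admissible_bets E M G \<Longrightarrow> natural_extension E M X \<le> (SUP \<omega>. ereal (gain G \<omega> + X \<omega>))"
  unfolding natural_extension_def by (rule INF_lower) simp

lemma natural_extension_ge:
  assumes coh: "coherent_on E M" and G: "admissible_bets E M G"
    and below: "\<And>\<omega>. gain G \<omega> + k \<le> X \<omega>"
  shows "ereal k \<le> natural_extension E M X"
  unfolding natural_extension_def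
proof (rule INF_greatest)
  fix G' assume "G' \<in> {xs. admissible_bets E M xs}"
  then have "0 \<le> (SUP \<omega>. ereal (gain (G' @ G) \<omega>))" using coh G by (simp add: coherent_on_def)
  then have "ereal k \<le> (SUP \<omega>. ereal (gain (G' @ G) \<omega>)) + ereal k"
    using add_mono[of 0 _ "ereal k" "ereal k"] by simp
  also have "\<dots> = (SUP \<omega>. ereal (gain (G' @ G) \<omega>) + ereal k)"
    by (rule SUP_ereal_add_left[symmetric]) auto
  also have "\<dots> \<le> (SUP \<omega>. ereal (gain G' \<omega> + X \<omega>))"
    using below by (intro SUP_mono') (simp add: gain_append)
  finally show "ereal k \<le> (SUP \<omega>. ereal (gain G' \<omega> + X \<omega>))" .
qed

lemma coherent_natural_extension_bet:
  assumes coh: "coherent_on E M" and G: "admissible_bets E M G"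
    and bet: "admissible_bet (natural_extension E M X) A c"
  shows "0 \<le> (SUP \<omega>. ereal (gain G \<omega> + A * (X \<omega> - c)))"
proof (cases A "0 :: real" rule: linorder_cases)
  case less
  show ?thesis
  proof (rule ccontr)
    assume "\<not> ?thesis"
    then obtain e where e: "0 < e" "\<And>\<omega>. gain G \<omega> + A * (X \<omega> - c) \<le> -e"
      unfolding ereal_SUP_nonneg_iff by (auto simp: not_less)
    define B where "B = -A"
    have "0 < B" using less by (simp add: B_def)
    have below: "gain (scale_bets (1 / B) G) \<omega> + (c + e / B) \<le> X \<omega>" for \<omega>
    proof -
      have "gain G \<omega> + e \<le> (X \<omega> - c) * B" using e(2)[of \<omega>] by (simp add: B_def algebra_simps)
      then have "(gain G \<omega> + e) / B \<le> X \<omega> - c" using \<open>0 < B\<close> by (simp add: pos_divide_le_eq)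
      then show ?thesis by (simp add: gain_scale_bets add_divide_distrib)
    qed
    have "admissible_bets E M (scale_bets (1 / B) G)"
      using \<open>0 < B\<close> G by (intro admissible_bets_scale_bets) auto
    then have "ereal (c + e / B) \<le> natural_extension E M X"
      using natural_extension_ge[OF coh _ below] by blast
    moreover have "0 < e / B" using e(1) \<open>0 < B\<close> by simp
    ultimately show False
      using bet less by (cases "natural_extension E M X") (auto simp: admissible_bet_def)
  qed
next
  case equal
  then show ?thesis using coh G by (simp add: coherent_on_def)
next
  case greater
  show ?thesis
    unfolding ereal_SUP_nonneg_iff
  proof (intro allI impI)
    fix e :: real assume "0 < e"
    have "ereal (c - e / A) < natural_extension E M X"
      using bet greater \<open>0 < e\<close> by (cases "natural_extension E M X") (auto simp: admissible_bet_def)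
    also have "\<dots> \<le> (SUP \<omega>. ereal (gain (scale_bets (1 / A) G) \<omega> + X \<omega>))"
      using greater by (intro natural_extension_le admissible_bets_scale_bets G) auto
    finally obtain \<omega> where "c - e / A < gain G \<omega> / A + X \<omega>"
      by (auto simp: less_SUP_iff gain_scale_bets)
    then have "A * (c - e / A) < A * (gain G \<omega> / A + X \<omega>)"
      using greater by (rule mult_strict_left_mono)
    then have "-e < gain G \<omega> + A * (X \<omega> - c)"
      using greater by (simp add: algebra_simps)
    then show "\<exists>\<omega>. -e < gain G \<omega> + A * (X \<omega> - c)" ..
  qed
qed

lemma coherent_on_insert:
  assumes coh: "coherent_on E M" and "X \<notin> M"
  shows "coherent_on (E(X := natural_extension E M X)) (insert X M)"
  unfolding coherent_on_def
proof (intro allI impI)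
  fix xs assume xs: "admissible_bets (E(X := natural_extension E M X)) (insert X M) xs"
  define G where "G = filter (\<lambda>t. fst t \<noteq> X) xs"
  define H where "H = filter (\<lambda>t. \<not> fst t \<noteq> X) xs"
  have "admissible_bets E M G"
    using xs by (auto simp: G_def admissible_bets_def)
  moreover have "\<forall>(Y, a, c)\<in>set H. Y = X \<and> admissible_bet (natural_extension E M X) a c"
    using xs by (auto simp: H_def admissible_bets_def)
  then obtain A c where "admissible_bet (natural_extension E M X) A c"
    and H: "\<And>\<omega>. gain H \<omega> = A * (X \<omega> - c)"
    using gain_single_variable by blast
  ultimately have "0 \<le> (SUP \<omega>. ereal (gain G \<omega> + A * (X \<omega> - c)))"
    by (intro coherent_natural_extension_bet[OF coh])
  then show "0 \<le> (SUP \<omega>. ereal (gain xs \<omega>))"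
    unfolding gain_filter_partition[of xs _ "\<lambda>t. fst t \<noteq> X"] G_def[symmetric] H_def[symmetric] H .
qed

text \<open>Zorn's lemma is applied to the graphs of coherent partial previsions, ordered by inclusion.\<close>

definition graph_val :: "('a \<times> 'b) set \<Rightarrow> 'a \<Rightarrow> 'b" where
  "graph_val R x = (THE v. (x, v) \<in> R)"

lemma graph_val_eq: "single_valued R \<Longrightarrow> (x, v) \<in> R \<Longrightarrow> graph_val R x = v"
  unfolding graph_val_def by (rule the_equality) (auto dest: single_valuedD)

definition coherent_graph :: "(('w \<Rightarrow> real) \<times> ereal) set \<Rightarrow> bool" where
  "coherent_graph R \<longleftrightarrow> single_valued R \<and> coherent_on (graph_val R) (Domain R)"

lemma coherent_graph_Union_chain:
  assumes "C \<noteq> {}" and chain: "subset.chain {R. coherent_graph R} C"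
  shows "coherent_graph (\<Union>C)"
proof -
  have C: "\<And>R. R \<in> C \<Longrightarrow> coherent_graph R"
    and comparable: "\<And>R R'. R \<in> C \<Longrightarrow> R' \<in> C \<Longrightarrow> R \<subseteq> R' \<or> R' \<subseteq> R"
    using chain by (auto simp: subset.chain_def)
  have sv: "single_valued (\<Union>C)"
  proof (rule single_valuedI)
    fix x y z assume "(x, y) \<in> \<Union>C" "(x, z) \<in> \<Union>C"
    then obtain R R' where "R \<in> C" "R' \<in> C" "(x, y) \<in> R" "(x, z) \<in> R'" by auto
    then show "y = z"
      using comparable[of R R'] C by (auto simp: coherent_graph_def dest: single_valuedD)
  qed
  have "coherent_on (graph_val (\<Union>C)) (Domain (\<Union>C))"
    unfolding coherent_on_def
  proof (intro allI impI)
    fix xs assume xs: "admissible_bets (graph_val (\<Union>C)) (Domain (\<Union>C)) xs"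
    let ?P = "(\<lambda>Y. (Y, graph_val (\<Union>C) Y)) ` fst ` set xs"
    have "?P \<subseteq> \<Union>C"
    proof
      fix p assume "p \<in> ?P"
      then obtain Y where Y: "Y \<in> fst ` set xs" "p = (Y, graph_val (\<Union>C) Y)" by blast
      have "fst ` set xs \<subseteq> Domain (\<Union>C)" using xs by (rule admissible_bets_variables)
      with Y(1) have "Y \<in> Domain (\<Union>C)" by (rule rev_subsetD)
      then obtain v where "(Y, v) \<in> \<Union>C" by (rule DomainE)
      then show "p \<in> \<Union>C" using graph_val_eq[OF sv] Y(2) by simp
    qed
    moreover have "finite ?P" by simp
    ultimately obtain R where R: "R \<in> C" "?P \<subseteq> R"
      using finite_subset_Union_chain[OF _ _ \<open>C \<noteq> {}\<close> chain] by metis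
    have "admissible_bets (graph_val R) (Domain R) xs"
    proof (rule admissible_bets_transfer[OF xs])
      fix Y assume "Y \<in> fst ` set xs"
      then have "(Y, graph_val (\<Union>C) Y) \<in> R" using R(2) by auto
      then show "Y \<in> Domain R \<and> graph_val R Y = graph_val (\<Union>C) Y"
        using graph_val_eq C[OF R(1)] by (auto simp: coherent_graph_def)
    qed
    then show "0 \<le> (SUP \<omega>. ereal (gain xs \<omega>))"
      using C[OF R(1)] by (auto simp: coherent_graph_def coherent_on_def)
  qed
  with sv show ?thesis by (simp add: coherent_graph_def)
qed

lemma coherent_graph_insert:
  assumes R: "coherent_graph R" and X: "X \<notin> Domain R"
  shows "coherent_graph (insert (X, natural_extension (graph_val R) (Domain R) X) R)"
    (is "coherent_graph ?R")
proof -
  let ?E = "(graph_val R)(X := natural_extension (graph_val R) (Domain R) X)"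
  have sv: "single_valued ?R"
    using R X by (auto simp: coherent_graph_def single_valued_def)
  have "?E Y = graph_val ?R Y" if Y: "Y \<in> insert X (Domain R)" for Y
  proof (cases "Y = X")
    case False
    then obtain v where "(Y, v) \<in> R" using Y by auto
    then show ?thesis
      using False graph_val_eq[OF sv] graph_val_eq[of R] R by (auto simp: coherent_graph_def)
  qed (simp add: graph_val_eq[OF sv insertI1])
  moreover have "coherent_on ?E (insert X (Domain R))"
    using R X by (intro coherent_on_insert) (auto simp: coherent_graph_def)
  ultimately have "coherent_on (graph_val ?R) (Domain ?R)"
    using coherent_on_cong by (metis Domain_insert fst_conv)
  with sv show ?thesis by (simp add: coherent_graph_def)
qed

lemma coherent_graph_image:
  assumes "coherent_on P0 D"
  shows "coherent_graph ((\<lambda>X. (X, P0 X)) ` D)"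
proof -
  let ?R = "(\<lambda>X. (X, P0 X)) ` D"
  have sv: "single_valued ?R" by (auto simp: single_valued_def)
  have "graph_val ?R X = P0 X" if "X \<in> D" for X
    using graph_val_eq[OF sv] that by (simp add: image_iff)
  then have "coherent_on (graph_val ?R) D \<longleftrightarrow> coherent_on P0 D"
    by (rule coherent_on_cong)
  moreover have "Domain ?R = D" by force
  ultimately show ?thesis using sv assms by (simp add: coherent_graph_def)
qed

lemma coherent_on_extend_UNIV:
  assumes "coherent_on P0 D"
  shows "\<exists>E. coherent_on E UNIV \<and> (\<forall>X\<in>D. E X = P0 X)"
proof -
  define R0 where "R0 = (\<lambda>X. (X, P0 X)) ` D"
  define \<A> where "\<A> = {R. R0 \<subseteq> R \<and> coherent_graph R}"
  have "R0 \<in> \<A>" using coherent_graph_image[OF assms] by (simp add: \<A>_def R0_def)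
  moreover have "\<Union>C \<in> \<A>" if "C \<noteq> {}" "subset.chain \<A> C" for C
  proof -
    have "subset.chain {R. coherent_graph R} C"
      using that(2) by (auto simp: subset.chain_def \<A>_def)
    then show ?thesis
      using that coherent_graph_Union_chain by (auto simp: \<A>_def subset.chain_def)
  qed
  ultimately obtain M where M: "M \<in> \<A>" and maximal: "\<And>R. R \<in> \<A> \<Longrightarrow> M \<subseteq> R \<Longrightarrow> R = M"
    using subset_Zorn_nonempty[of \<A>] by blast
  have "Domain M = UNIV"
  proof (rule ccontr)
    assume "Domain M \<noteq> UNIV"
    then obtain X where X: "X \<notin> Domain M" by auto
    let ?M = "insert (X, natural_extension (graph_val M) (Domain M) X) M"
    have "?M \<in> \<A>" using M coherent_graph_insert[OF _ X] by (auto simp: \<A>_def)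
    then have "?M = M" using maximal by blast
    then show False using X by auto
  qed
  moreover have "graph_val M X = P0 X" if "X \<in> D" for X
  proof -
    have "(X, P0 X) \<in> M" using M that by (auto simp: \<A>_def R0_def)
    then show ?thesis using M graph_val_eq by (auto simp: \<A>_def coherent_graph_def)
  qed
  ultimately show ?thesis
    using M by (auto simp: \<A>_def coherent_graph_def)
qed

section \<open>Coherent previsions on all random variables\<close>

lemma admissible_bet_price_le:
  assumes "ereal a * v \<noteq> -\<infinity>" "ereal r \<le> ereal a * v"
  shows "\<exists>c. admissible_bet v a c \<and> r \<le> a * c"
proof (cases v)
  case (real x)
  then show ?thesis using assms by (intro exI[of _ x]) (auto simp: admissible_bet_def)
next
  case PInf
  then show ?thesis
    using assms by (intro exI[of _ "r / a"]) (auto simp: admissible_bet_def split: if_splits)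
next
  case MInf
  then show ?thesis
    using assms by (intro exI[of _ "r / a"]) (auto simp: admissible_bet_def split: if_splits)
qed

lemma ereal_less_add_split:
  assumes "ereal K < t + s" "t \<noteq> -\<infinity>" "s \<noteq> -\<infinity>"
  shows "\<exists>r. ereal r \<le> t \<and> ereal (K - r) < s"
proof (cases t)
  case (real x)
  then show ?thesis using assms by (intro exI[of _ x]) (cases s; auto)
next
  case PInf
  show ?thesis
  proof (cases s)
    case (real y)
    then show ?thesis using PInf by (intro exI[of _ "K - y + 1"]) auto
  qed (use PInf assms in auto)
qed (use assms in auto)

lemma exists_admissible_prices:
  assumes "\<forall>(Y, a)\<in>set ts. ereal a * E Y \<noteq> -\<infinity>"
    and "ereal K < (\<Sum>(Y, a)\<leftarrow>ts. ereal a * E Y)"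
  shows "\<exists>xs. map (\<lambda>(Y, a, c). (Y, a)) xs = ts \<and> (\<forall>(Y, a, c)\<in>set xs. admissible_bet (E Y) a c)
            \<and> K < (\<Sum>(Y, a, c)\<leftarrow>xs. a * c)"
  using assms
proof (induction ts arbitrary: K)
  case Nil
  then show ?case by (simp add: zero_ereal_def)
next
  case (Cons p ts)
  obtain Y a where p: "p = (Y, a)" by (cases p)
  let ?S = "(\<Sum>(Y, a)\<leftarrow>ts. ereal a * E Y)"
  have "ereal a * E Y \<noteq> -\<infinity>" using Cons.prems(1) p by auto
  moreover have "?S \<noteq> -\<infinity>"
    using Cons.prems(1) by (induction ts) auto
  ultimately obtain r where r: "ereal r \<le> ereal a * E Y" "ereal (K - r) < ?S"
    using ereal_less_add_split[of K "ereal a * E Y" ?S] Cons.prems(2) p by auto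
  obtain c where c: "admissible_bet (E Y) a c" "r \<le> a * c"
    using admissible_bet_price_le[OF \<open>ereal a * E Y \<noteq> -\<infinity>\<close> r(1)] by blast
  obtain xs where xs: "map (\<lambda>(Y, a, c). (Y, a)) xs = ts" "\<forall>(Y, a, c)\<in>set xs. admissible_bet (E Y) a c"
      "K - r < (\<Sum>(Y, a, c)\<leftarrow>xs. a * c)"
    using Cons.IH[of "K - r"] Cons.prems(1) r(2) by auto
  show ?case
    using xs c p by (intro exI[where x="(Y, a, c) # xs"]) auto
qed

text \<open>Monotonicity and extended linearity of a coherent prevision are instances of this.\<close>

lemma coherent_on_sum_le:
  assumes coh: "coherent_on E M"
    and ts: "\<forall>(Y, a)\<in>set ts. Y \<in> M \<and> ereal a * E Y \<noteq> -\<infinity>"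
    and bound: "\<And>\<omega>. (\<Sum>(Y, a)\<leftarrow>ts. a * Y \<omega>) \<le> K"
  shows "(\<Sum>(Y, a)\<leftarrow>ts. ereal a * E Y) \<le> ereal K"
proof (rule ccontr)
  assume "\<not> ?thesis"
  then obtain xs where xs: "map (\<lambda>(Y, a, c). (Y, a)) xs = ts"
      "\<forall>(Y, a, c)\<in>set xs. admissible_bet (E Y) a c" "K < (\<Sum>(Y, a, c)\<leftarrow>xs. a * c)"
    using exists_admissible_prices[of ts E K] ts by fastforce
  have "admissible_bets E M xs"
    using xs(1,2) ts by (fastforce simp: admissible_bets_def)
  moreover have "gain xs \<omega> = (\<Sum>(Y, a)\<leftarrow>ts. a * Y \<omega>) - (\<Sum>(Y, a, c)\<leftarrow>xs. a * c)" for \<omega>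
    unfolding xs(1)[symmetric] gain_def
    by (induction xs) (auto simp: algebra_simps)
  ultimately obtain \<omega> where "K - (\<Sum>(Y, a, c)\<leftarrow>xs. a * c) < gain xs \<omega>"
    using coherent_onD[OF coh, of xs "(\<Sum>(Y, a, c)\<leftarrow>xs. a * c) - K"] xs(3) by auto
  then show False
    using bound[of \<omega>] \<open>gain xs \<omega> = _\<close> by linarith
qed

locale coherent_prevision =
  fixes E :: "('w \<Rightarrow> real) \<Rightarrow> ereal"
  assumes coherent: "coherent_on E UNIV"
begin

lemma sum_le:
  "\<forall>(Y, a)\<in>set ts. ereal a * E Y \<noteq> -\<infinity> \<Longrightarrow> (\<And>\<omega>. (\<Sum>(Y, a)\<leftarrow>ts. a * Y \<omega>) \<le> K)
    \<Longrightarrow> (\<Sum>(Y, a)\<leftarrow>ts. ereal a * E Y) \<le> ereal K"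
  by (rule coherent_on_sum_le[OF coherent]) auto

lemma one: "E (\<lambda>_. 1) = 1"
proof -
  have "E (\<lambda>_. 1) \<le> 1" if "E (\<lambda>_. 1) \<noteq> -\<infinity>"
    using sum_le[of "[(\<lambda>_. 1, 1)]" 1] that by (simp add: one_ereal_def)
  moreover have "1 \<le> E (\<lambda>_. 1)" if "E (\<lambda>_. 1) \<noteq> \<infinity>"
  proof -
    have "ereal (-1) * E (\<lambda>_. 1) \<le> ereal (-1)"
      using sum_le[of "[(\<lambda>_. 1, -1)]" "-1"] that by (cases "E (\<lambda>_. 1)") auto
    then show ?thesis by (cases "E (\<lambda>_. 1)") auto
  qed
  ultimately show ?thesis by (cases "E (\<lambda>_. 1)") auto
qed

lemma mono:
  assumes "\<And>\<omega>. X \<omega> \<le> Y \<omega>"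
  shows "E X \<le> E Y"
proof (cases "E X = -\<infinity> \<or> E Y = \<infinity>")
  case False
  then have "ereal 1 * E X + (ereal (-1) * E Y + 0) \<le> ereal 0"
    using sum_le[of "[(X, 1), (Y, -1)]" 0] assms by (cases "E Y") auto
  then show ?thesis using False by (cases "E X"; cases "E Y") auto
qed auto

lemma scale: "E (\<lambda>\<omega>. a * X \<omega>) = ereal a * E X"
proof -
  define p where "p = E (\<lambda>\<omega>. a * X \<omega>)"
  define q where "q = ereal a * E X"
  have minus_q: "ereal (-a) * E X = - q" unfolding q_def by (cases "E X") auto
  have "p \<le> q" if "p \<noteq> -\<infinity>" "q \<noteq> \<infinity>"
  proof -
    have "(0 < a \<longrightarrow> E X \<noteq> \<infinity>) \<and> (a < 0 \<longrightarrow> E X \<noteq> -\<infinity>)"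
      using that(2) unfolding q_def by auto
    then have "ereal 1 * p + (ereal (-a) * E X + 0) \<le> ereal 0"
      using sum_le[of "[(\<lambda>\<omega>. a * X \<omega>, 1), (X, -a)]" 0] that minus_q unfolding p_def
      by (auto simp: one_ereal_def[symmetric])
    then show ?thesis using that minus_q by (cases p; cases q) auto
  qed
  moreover have "q \<le> p" if "p \<noteq> \<infinity>" "q \<noteq> -\<infinity>"
  proof -
    have "ereal (-1) * p + (q + 0) \<le> ereal 0"
      using sum_le[of "[(\<lambda>\<omega>. a * X \<omega>, -1), (X, a)]" 0] that unfolding p_def q_def
      by (cases "E (\<lambda>\<omega>. a * X \<omega>)") auto
    then show ?thesis using that by (cases p; cases q) auto
  qed
  ultimately show ?thesis unfolding p_def[symmetric] q_def[symmetric] by (cases p; cases q) auto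
qed

lemma add:
  assumes "\<not> (E X = \<infinity> \<and> E Y = -\<infinity>)" "\<not> (E X = -\<infinity> \<and> E Y = \<infinity>)"
  shows "E (\<lambda>\<omega>. X \<omega> + Y \<omega>) = E X + E Y"
proof -
  define p where "p = E (\<lambda>\<omega>. X \<omega> + Y \<omega>)"
  have minus: "ereal (-1) * z = -z" for z by (cases z) auto
  have "p + - E X + - E Y \<le> 0" if "p \<noteq> -\<infinity>" "E X \<noteq> \<infinity>" "E Y \<noteq> \<infinity>"
  proof -
    have "ereal 1 * p + (ereal (-1) * E X + (ereal (-1) * E Y + 0)) \<le> ereal 0"
      using sum_le[of "[(\<lambda>\<omega>. X \<omega> + Y \<omega>, 1), (X, -1), (Y, -1)]" 0] that minus unfolding p_def
      by auto
    then show ?thesis using minus by (simp add: add.assoc zero_ereal_def[symmetric])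
  qed
  moreover have "- p + E X + E Y \<le> 0" if "p \<noteq> \<infinity>" "E X \<noteq> -\<infinity>" "E Y \<noteq> -\<infinity>"
  proof -
    have "ereal (-1) * p + (ereal 1 * E X + (ereal 1 * E Y + 0)) \<le> ereal 0"
      using sum_le[of "[(\<lambda>\<omega>. X \<omega> + Y \<omega>, -1), (X, 1), (Y, 1)]" 0] that minus unfolding p_def
      by auto
    then show ?thesis using minus by (simp add: add.assoc zero_ereal_def[symmetric])
  qed
  ultimately show ?thesis
    using assms unfolding p_def[symmetric] by (cases p; cases "E X"; cases "E Y") auto
qed

lemma const: "E (\<lambda>_. r) = ereal r"
  using scale[of r "\<lambda>_. 1"] one by simp

lemma linear:
  assumes "\<not> (ereal a * E X = \<infinity> \<and> ereal b * E Y = -\<infinity>)"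
    and "\<not> (ereal a * E X = -\<infinity> \<and> ereal b * E Y = \<infinity>)"
  shows "E (\<lambda>\<omega>. a * X \<omega> + b * Y \<omega>) = ereal a * E X + ereal b * E Y"
  using add[of "\<lambda>\<omega>. a * X \<omega>" "\<lambda>\<omega>. b * Y \<omega>"] scale assms by simp

lemma sum_nonneg:
  assumes "finite F" "\<forall>p\<in>F. 0 \<le> E (h p)"
  shows "0 \<le> E (\<lambda>\<omega>. \<Sum>p\<in>F. h p \<omega>)"
  using assms
proof (induction F rule: finite_induct)
  case empty
  then show ?case using const[of 0] by simp
next
  case (insert x F)
  then have "E (\<lambda>\<omega>. h x \<omega> + (\<Sum>p\<in>F. h p \<omega>)) = E (h x) + E (\<lambda>\<omega>. \<Sum>p\<in>F. h p \<omega>)"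
    by (intro add) auto
  then show ?case using insert by simp
qed

lemma SUP_nonneg:
  assumes "0 \<le> E Z"
  shows "0 \<le> (SUP \<omega>. ereal (Z \<omega>))"
proof (rule ccontr)
  assume "\<not> ?thesis"
  then have "(SUP \<omega>. ereal (Z \<omega>)) < 0" by simp
  from dense[OF this] obtain z where z: "(SUP \<omega>. ereal (Z \<omega>)) < z" "z < 0" by blast
  then obtain r where r: "(SUP \<omega>. ereal (Z \<omega>)) < ereal r" "r < 0"
    by (cases z) auto
  have "Z \<omega> \<le> r" for \<omega>
  proof -
    have "ereal (Z \<omega>) \<le> (SUP \<omega>. ereal (Z \<omega>))" by (rule SUP_upper) simp
    then have "ereal (Z \<omega>) < ereal r" using r(1) by (rule order.strict_trans1)
    then show ?thesis by simp
  qed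
  then have "E Z \<le> ereal r" using mono[of Z "\<lambda>_. r"] const by simp
  with assms have "0 \<le> ereal r" by (rule order.trans)
  then show False using r(2) by simp
qed

lemma indicator_nonneg: "0 \<le> E (indicator B)"
  using mono[of "\<lambda>_. 0" "indicator B"] const[of 0] by (simp add: zero_ereal_def)

lemma indicator_le_one: "E (indicator B) \<le> 1"
  using mono[of "indicator B" "\<lambda>_. 1"] one by (simp add: indicator_def)

end

section \<open>Conditioning\<close>

definition sign_infty :: "ereal \<Rightarrow> real \<Rightarrow> ereal" where
  "sign_infty u v = (if 0 < u then \<infinity> else if u < 0 then -\<infinity> else ereal v)"

lemma sign_infty_mono: "u1 \<le> u2 \<Longrightarrow> v1 \<le> v2 \<Longrightarrow> sign_infty u1 v1 \<le> sign_infty u2 v2"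
  by (auto simp: sign_infty_def)

lemma sign_infty_scale: "ereal a * sign_infty u v = sign_infty (ereal a * u) (a * v)"
  by (cases a "0 :: real" rule: linorder_cases; cases u)
     (auto simp: sign_infty_def zero_less_mult_iff mult_less_0_iff)

lemma sign_infty_add:
  assumes "\<not> (sign_infty u1 v1 = \<infinity> \<and> sign_infty u2 v2 = -\<infinity>)"
    and "\<not> (sign_infty u1 v1 = -\<infinity> \<and> sign_infty u2 v2 = \<infinity>)"
  shows "sign_infty (u1 + u2) (v1 + v2) = sign_infty u1 v1 + sign_infty u2 v2"
  using assms by (cases u1; cases u2) (auto simp: sign_infty_def)

lemma admissible_bet_sign_infty: "admissible_bet (sign_infty u v) a c \<Longrightarrow> 0 \<le> ereal a * u"
  by (cases u "0 :: ereal" rule: linorder_cases; cases u)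
     (auto simp: sign_infty_def admissible_bet_def zero_le_mult_iff)

lemma admissible_bet_ratio:
  assumes "admissible_bet (ereal (1 / r) * u) a c" "0 < r"
  shows "0 \<le> ereal a * u + ereal (- (a * c * r))"
proof (cases u)
  case (real x)
  then have "c = x / r" using assms by (auto simp: admissible_bet_def)
  then show ?thesis using real \<open>0 < r\<close> by simp
next
  case PInf
  then show ?thesis using assms by (cases "a = 0") (auto simp: admissible_bet_def)
next
  case MInf
  then show ?thesis using assms by (cases "a = 0") (auto simp: admissible_bet_def)
qed

context coherent_prevision
begin

text \<open>When \<open>E B = 0\<close>, coherence forces \<open>P(X|B) = \<plusminus>\<infinity>\<close> according to the sign of \<open>E (X B)\<close>;
  when \<open>E (X B) = 0\<close> as well, the value \<open>X b\<close> at a fixed point \<open>b \<in> B\<close> keeps \<open>P(\<cdot>|B)\<close> linear,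
  monotone and normalised.\<close>

definition cond :: "('w \<Rightarrow> real) \<Rightarrow> 'w set \<Rightarrow> ereal" where
  "cond X B = (if 0 < E (indicator B)
      then E (\<lambda>\<omega>. (1 / real_of_ereal (E (indicator B))) * (X \<omega> * indicator B \<omega>))
      else sign_infty (E (\<lambda>\<omega>. X \<omega> * indicator B \<omega>)) (X (SOME b. b \<in> B)))"

lemma cond_UNIV: "cond X UNIV = E X"
  using one by (simp add: cond_def)

lemma cond_mult_indicator:
  assumes "B \<noteq> {}"
  shows "cond (\<lambda>\<omega>. X \<omega> * indicator B \<omega>) B = cond X B"
proof -
  have "(SOME b. b \<in> B) \<in> B" using assms by (auto intro: someI)
  then have "X (SOME b. b \<in> B) * indicator B (SOME b. b \<in> B) = X (SOME b. b \<in> B)"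
    by simp
  moreover have "X \<omega> * indicator B \<omega> * indicator B \<omega> = X \<omega> * indicator B \<omega>" for \<omega>
    by (simp add: indicator_def)
  ultimately show ?thesis unfolding cond_def by (simp only:)
qed

lemma indicator_pos:
  assumes "0 < E (indicator B)"
  obtains r where "E (indicator B) = ereal r" "0 < r"
  using assms indicator_le_one[of B] by (cases "E (indicator B)") auto

lemma fa_expectation_cond_pos:
  assumes "0 < E (indicator B)"
  shows "fa_expectation L (\<lambda>X. cond X B)"
proof -
  obtain r where r: "E (indicator B) = ereal r" "0 < r" using indicator_pos assms by blast
  define T where "T X = (\<lambda>\<omega>. (1 / r) * (X \<omega> * indicator B \<omega>))" for X
  have cond: "cond X B = E (T X)" for X
    using r by (simp add: cond_def T_def)
  have "fa_expectation L (\<lambda>X. E (T X))"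
    unfolding fa_expectation_def
  proof (intro conjI ballI allI impI)
    fix X Y :: "'w \<Rightarrow> real" assume "\<forall>\<omega>. X \<omega> \<le> Y \<omega>"
    then show "E (T X) \<le> E (T Y)"
      using r by (intro mono) (simp add: T_def divide_right_mono mult_right_mono)
  next
    fix X Y :: "'w \<Rightarrow> real" and a b :: real
    assume "\<not> (ereal a * E (T X) = \<infinity> \<and> ereal b * E (T Y) = -\<infinity>)
      \<and> \<not> (ereal a * E (T X) = -\<infinity> \<and> ereal b * E (T Y) = \<infinity>)"
    moreover have "T (\<lambda>\<omega>. a * X \<omega> + b * Y \<omega>) = (\<lambda>\<omega>. a * T X \<omega> + b * T Y \<omega>)"
      by (auto simp: T_def algebra_simps)
    ultimately show "E (T (\<lambda>\<omega>. a * X \<omega> + b * Y \<omega>)) = ereal a * E (T X) + ereal b * E (T Y)"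
      using linear[of a "T X" b "T Y"] by simp
  next
    have "E (T (\<lambda>_. 1)) = E (\<lambda>\<omega>. (1 / r) * indicator B \<omega>)" by (simp add: T_def)
    also have "\<dots> = ereal (1 / r) * E (indicator B)" by (rule scale)
    finally show "E (T (\<lambda>_. 1)) = 1" using r by simp
  qed
  then show ?thesis unfolding cond .
qed

lemma fa_expectation_cond_null:
  assumes "E (indicator B) = 0" "B \<noteq> {}"
  shows "fa_expectation L (\<lambda>X. cond X B)"
proof -
  define b where "b = (SOME b. b \<in> B)"
  have "b \<in> B" using assms(2) unfolding b_def by (auto intro: someI)
  define u where "u X = E (\<lambda>\<omega>. X \<omega> * indicator B \<omega>)" for X
  have cond: "cond X B = sign_infty (u X) (X b)" for X
    using assms by (simp add: cond_def u_def b_def)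
  show ?thesis
    unfolding fa_expectation_def cond
  proof (intro conjI ballI allI impI)
    fix X Y :: "'w \<Rightarrow> real" assume "\<forall>\<omega>. X \<omega> \<le> Y \<omega>"
    then show "sign_infty (u X) (X b) \<le> sign_infty (u Y) (Y b)"
      by (intro sign_infty_mono) (auto simp: u_def intro!: mono mult_right_mono)
  next
    fix X Y :: "'w \<Rightarrow> real" and a b' :: real
    assume *: "\<not> (ereal a * sign_infty (u X) (X b) = \<infinity> \<and> ereal b' * sign_infty (u Y) (Y b) = -\<infinity>)
      \<and> \<not> (ereal a * sign_infty (u X) (X b) = -\<infinity> \<and> ereal b' * sign_infty (u Y) (Y b) = \<infinity>)"
    then have "\<not> (ereal a * u X = \<infinity> \<and> ereal b' * u Y = -\<infinity>)"
      "\<not> (ereal a * u X = -\<infinity> \<and> ereal b' * u Y = \<infinity>)"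
      unfolding sign_infty_scale by (auto simp: sign_infty_def)
    moreover have "(\<lambda>\<omega>. (a * X \<omega> + b' * Y \<omega>) * indicator B \<omega>)
        = (\<lambda>\<omega>. a * (X \<omega> * indicator B \<omega>) + b' * (Y \<omega> * indicator B \<omega>))"
      by (auto simp: algebra_simps)
    ultimately have "u (\<lambda>\<omega>. a * X \<omega> + b' * Y \<omega>) = ereal a * u X + ereal b' * u Y"
      unfolding u_def by (simp add: linear)
    then show "sign_infty (u (\<lambda>\<omega>. a * X \<omega> + b' * Y \<omega>)) (a * X b + b' * Y b)
        = ereal a * sign_infty (u X) (X b) + ereal b' * sign_infty (u Y) (Y b)"
      using sign_infty_add[of "ereal a * u X" "a * X b" "ereal b' * u Y" "b' * Y b"] *
      unfolding sign_infty_scale by simp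
  next
    show "sign_infty (u (\<lambda>_. 1)) 1 = 1"
      using assms(1) by (simp add: u_def sign_infty_def)
  qed
qed

lemma fa_expectation_cond: "B \<noteq> {} \<Longrightarrow> fa_expectation L (\<lambda>X. cond X B)"
  using fa_expectation_cond_pos fa_expectation_cond_null indicator_nonneg[of B]
  by (cases "E (indicator B) = 0") auto

lemma cond_bet_nonneg:
  assumes bet: "admissible_bet (cond X B) a c"
  shows "0 \<le> E (\<lambda>\<omega>. a * indicator B \<omega> * (X \<omega> - c))"
proof -
  obtain r where r: "E (indicator B) = ereal r" "0 \<le> r"
    using indicator_nonneg[of B] indicator_le_one[of B] by (cases "E (indicator B)") auto
  define u where "u = E (\<lambda>\<omega>. X \<omega> * indicator B \<omega>)"
  have "(\<lambda>\<omega>. a * indicator B \<omega> * (X \<omega> - c))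
      = (\<lambda>\<omega>. a * (X \<omega> * indicator B \<omega>) + (- (a * c)) * indicator B \<omega>)"
    by (auto simp: algebra_simps)
  then have E_bet: "E (\<lambda>\<omega>. a * indicator B \<omega> * (X \<omega> - c)) = ereal a * u + ereal (- (a * c) * r)"
    using linear[of a "\<lambda>\<omega>. X \<omega> * indicator B \<omega>" "- (a * c)" "indicator B"] r
    by (simp add: u_def)
  show ?thesis
  proof (cases "0 < r")
    case True
    then have "cond X B = E (\<lambda>\<omega>. (1 / r) * (X \<omega> * indicator B \<omega>))"
      using r by (simp add: cond_def)
    also have "\<dots> = ereal (1 / r) * u"
      unfolding u_def by (rule scale)
    finally have "cond X B = ereal (1 / r) * u" .
    then show ?thesis unfolding E_bet using admissible_bet_ratio bet True by simp
  next
    case False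
    then have "cond X B = sign_infty u (X (SOME b. b \<in> B))"
      using r by (simp add: cond_def u_def)
    then show ?thesis
      unfolding E_bet using admissible_bet_sign_infty bet False r(2) by simp
  qed
qed

lemma coherent1_cond: "coherent1 S cond"
  unfolding coherent1_iff_admissible_bet
proof (intro allI impI)
  fix F \<alpha> c
  assume F: "finite F \<and> F \<subseteq> S \<and> (\<forall>p\<in>F. admissible_bet (cond (fst p) (snd p)) (\<alpha> p) (c p))"
  then have "0 \<le> E (\<lambda>\<omega>. \<Sum>p\<in>F. \<alpha> p * indicator (snd p) \<omega> * (fst p \<omega> - c p))"
    by (intro sum_nonneg) (auto intro: cond_bet_nonneg)
  then show "0 \<le> (SUP \<omega>. ereal (\<Sum>p\<in>F. \<alpha> p * indicator (snd p) \<omega> * (fst p \<omega> - c p)))"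
    by (rule SUP_nonneg)
qed

end

theorem lemma7p2:
  fixes D :: "('w \<Rightarrow> real) set" and P0 :: "('w \<Rightarrow> real) \<Rightarrow> ereal"
  assumes const_in: "\<And>c. (\<lambda>_. c) \<in> D"
    and coh: "coherent1 {(X, UNIV) | X. X \<in> D} (\<lambda>X B. P0 X)"
  shows "\<exists>P :: ('w \<Rightarrow> real) \<Rightarrow> 'w set \<Rightarrow> ereal.
           coherent1 {(X, B). X \<in> (lin_span {(\<lambda>\<omega>. X \<omega> * indicator B \<omega>) | X B. X \<in> D \<and> B \<noteq> {}}) \<and> B \<noteq> {}} P
         \<and> (\<forall>X\<in>D. P X UNIV = P0 X)
         \<and> (\<forall>B. B \<noteq> {} \<longrightarrow> fa_expectation (lin_span {(\<lambda>\<omega>. X \<omega> * indicator B \<omega>) | X B. X \<in> D \<and> B \<noteq> {}}) (\<lambda>X. P X B)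
                 \<and> (\<forall>X\<in>(lin_span {(\<lambda>\<omega>. X \<omega> * indicator B \<omega>) | X B. X \<in> D \<and> B \<noteq> {}}). P (\<lambda>\<omega>. X \<omega> * indicator B \<omega>) B = P X B))
         \<and> fa_cond_expectation (lin_span {(\<lambda>\<omega>. X \<omega> * indicator B \<omega>) | X B. X \<in> D \<and> B \<noteq> {}}) {B. B \<noteq> {}} P"
proof -
  obtain E where E: "coherent_on E UNIV" and extends: "\<forall>X\<in>D. E X = P0 X"
    using coherent_on_extend_UNIV[OF coherent1_imp_coherent_on[OF coh]] by blast
  interpret coherent_prevision E by standard (rule E)
  show ?thesis
    using extends cond_UNIV coherent1_cond fa_expectation_cond cond_mult_indicator
    by (intro exI[of _ cond]) (auto simp: fa_cond_expectation_def)
qed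

end
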